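(* Let $x$ be a $\theta$-cyclic point with cubic support graph $G_x$, and let $U\subset V_n$ be a critical cut of $G_x$, $\overline U=V_n\setminus U$. Let $y^U\in\mathbb{R}^{E(G_x^U)}$ and $y^{\overline U}\in\mathbb{R}^{E(G_x^{\overline U})}$ have convex combinations $\{\phi^U,\mathscr{F}^U\}$ and $\{\phi^{\overline U},\mathscr{F}^{\overline U}\}$ into handpicked tours of $G_x^U$ (with respect to $x^U$) and of $G_x^{\overline U}$ (with respect to $x^{\overline U}$), respectively. Suppose (i) for every multiset $p$ of edges of $\delta(U)$, $\phi^U_{v_{\overline U}}(p)=\phi^{\overline U}_{v_U}(p)$; and (ii) for every $F\in\mathscr{F}^U$, the multigraph obtained from $F$ by removing all copies of edges incident to $v_{\overline U}$ is connected and spans $U$. Then $y^U_e=y^{\overline U}_e$ for $e\in\delta(U)$, and the vector $y\in\mathbb{R}^{E_x}$ with $y_e=y^U_e$ for $e\in E(G_x^U)$ and $y_e=y^{\overline U}_e$ for $e\in E(G_x^{\overline U})$ can be written as a convex combination $\{\phi,\mathscr{F}\}$ of handpicked tours of $G_x$ such that (a) $\phi_2(e)=\phi^U_2(e)$ for $e\in E(G_x^U)$, (b) $\phi_2(e)=\phi^{\overline U}_2(e)$ for $e\in E(G_x^{\overline U})$, and (c) $|\mathscr{F}|\le|\mathscr{F}^U|+|\mathscr{F}^{\overline U}|$.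
   Context: $K_n$ is the complete graph on $V_n=\{1,\dots,n\}$; $\delta(U)$ is the set of edges with exactly one endpoint in $U$. $\mathrm{SUBT}(K_n)=\{x\in[0,1]^{E_n}: x(\delta(\{i\}))=2\ \forall i,\ x(\delta(U))\ge2\ \forall\,\emptyset\ne U\subsetneq V_n\}$. $G_x=(V_n,E_x)$, $E_x=\{e:x_e>0\}$. A $\theta$-cyclic point ($0<\theta\le\frac12$) is $x\in\mathrm{SUBT}(K_n)\cap\{0,\theta,1-\theta,1\}^{E_n}$ with $G_x$ of maximum degree at most 3 and every vertex incident to an edge of $x$-value 1; $W_x=\{e:x_e=1\}$, $H_x=\{e\in E_x:x_e<1\}$. A proper cut $U$ satisfies $|U|\ge2$, $|V_n\setminus U|\ge2$. A critical cut is a proper cut $U$ with $|\delta(U)|=3$, exactly one edge of $\delta(U)$ of $x$-value 1, and the edges of $\delta(U)$ having pairwise distinct endpoints in $U$ and pairwise distinct endpoints in $V_n\setminus U$. $G_x^U$ is obtained from $G_x$ by identifying all vertices of $\overline U$ into one new vertex $v_{\overline U}$ and deleting loops; $x^U$ is the vector giving each edge of $G_x^U$ its $x$-value (it is again a $\theta$-cyclic point with cubic support). Symmetrically $G_x^{\overline U}$, $v_U$, $x^{\overline U}$. In any such cubic support graph with point $x'$, for each vertex $u$ let $e_u$ be the edge of value 1 at $u$ and $f_u,g_u$ the other two edges with $x'_{f_u}=\theta$, $x'_{g_u}=1-\theta$ (fixed labelling if $\theta=\frac12$). A tour of a graph is a connected, spanning, Eulerian multigraph using only its edges (with repetition); $\chi^F$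 is the multiplicity vector, $\delta_F(u)$ the multiset of edges of $F$ at $u$. $\mathbb{P}_u=\{\{2e_u\},\{e_u,f_u\},\{e_u,g_u\},\{2e_u,2f_u\},\{2e_u,2g_u\},\{2e_u,f_u,g_u\},\{e_u,2f_u,g_u\},\{e_u,f_u,2g_u\}\}$; a tour is handpicked if $\delta_F(u)\in\mathbb{P}_u$ for all vertices $u$. A convex combination $\{\phi,\mathscr{F}\}$ for $y$: finite set of tours, weights $\phi_F\ge0$ summing to 1, $y=\sum_F\phi_F\chi^F$; $\phi_2(e)=\sum_{F:\chi^F_e=2}\phi_F$; $\phi_u(p)=\sum_{F:\delta_F(u)=p}\phi_F$. *)

theory Defs
  imports Complex_Main "HOL-Library.Multiset"
begin

definition Kn_edges :: "nat \<Rightarrow> nat set set" where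
  "Kn_edges n = {{i, j} | i j. i \<in> {1..n} \<and> j \<in> {1..n} \<and> i \<noteq> j}"

definition cut :: "nat \<Rightarrow> nat set \<Rightarrow> nat set set" where
  "cut n U = {e \<in> Kn_edges n. card (e \<inter> U) = 1}"

definition SUBT :: "nat \<Rightarrow> (nat set \<Rightarrow> real) \<Rightarrow> bool" where
  "SUBT n x \<longleftrightarrow>
     (\<forall>e \<in> Kn_edges n. 0 \<le> x e \<and> x e \<le> 1) \<and>
     (\<forall>i \<in> {1..n}. (\<Sum>e \<in> cut n {i}. x e) = 2) \<and>
     (\<forall>U. U \<noteq> {} \<and> U \<subset> {1..n} \<longrightarrow> (\<Sum>e \<in> cut n U. x e) \<ge> 2)"

definition supp_edges :: "nat \<Rightarrow> (nat set \<Rightarrow> real) \<Rightarrow> nat set set" where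
  "supp_edges n x = {e \<in> Kn_edges n. x e > 0}"

definition supp_degree :: "nat \<Rightarrow> (nat set \<Rightarrow> real) \<Rightarrow> nat \<Rightarrow> nat" where
  "supp_degree n x i = card {e \<in> supp_edges n x. i \<in> e}"

definition theta_cyclic :: "nat \<Rightarrow> real \<Rightarrow> (nat set \<Rightarrow> real) \<Rightarrow> bool" where
  "theta_cyclic n \<theta> x \<longleftrightarrow>
     0 < \<theta> \<and> \<theta> \<le> 1/2 \<and> SUBT n x \<and>
     (\<forall>e \<in> Kn_edges n. x e \<in> {0, \<theta>, 1 - \<theta>, 1}) \<and>
     (\<forall>i \<in> {1..n}. supp_degree n x i \<le> 3) \<and>
     (\<forall>i \<in> {1..n}. \<exists>e \<in> Kn_edges n. i \<in> e \<and> x e = 1)"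

definition cubic_support :: "nat \<Rightarrow> (nat set \<Rightarrow> real) \<Rightarrow> bool" where
  "cubic_support n x \<longleftrightarrow> (\<forall>i \<in> {1..n}. supp_degree n x i = 3)"

definition supp_cut :: "nat \<Rightarrow> (nat set \<Rightarrow> real) \<Rightarrow> nat set \<Rightarrow> nat set set" where
  "supp_cut n x U = cut n U \<inter> supp_edges n x"

definition proper_cut :: "nat \<Rightarrow> nat set \<Rightarrow> bool" where
  "proper_cut n U \<longleftrightarrow> U \<subseteq> {1..n} \<and> card U \<ge> 2 \<and> card ({1..n} - U) \<ge> 2"

definition critical_cut :: "nat \<Rightarrow> (nat set \<Rightarrow> real) \<Rightarrow> nat set \<Rightarrow> bool" where
  "critical_cut n x U \<longleftrightarrow>
     proper_cut n U \<and>
     card (supp_cut n x U) = 3 \<and>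
     card {e \<in> supp_cut n x U. x e = 1} = 1 \<and>
     inj_on (\<lambda>e. e \<inter> U) (supp_cut n x U) \<and>
     inj_on (\<lambda>e. e - U) (supp_cut n x U)"

text \<open>We use the vertex 0 (not in V_n = {1..n}) as the new vertex v_{\<bar>U} (resp. v_U).
  An edge of G_x^U is identified with the edge of G_x it comes from; its endpoints
  in G_x^U are given by \<open>contr_ends U\<close>.\<close>

definition contr_verts :: "nat set \<Rightarrow> nat set" where
  "contr_verts U = insert 0 U"

definition contr_edges :: "nat \<Rightarrow> (nat set \<Rightarrow> real) \<Rightarrow> nat set \<Rightarrow> nat set set" where
  "contr_edges n x U = {e \<in> supp_edges n x. e \<inter> U \<noteq> {}}"

definition contr_ends :: "nat set \<Rightarrow> nat set \<Rightarrow> nat set" where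
  "contr_ends U e = (if e \<subseteq> U then e else insert 0 (e \<inter> U))"

text \<open>A tour is represented by its multiplicity vector \<chi> :: 'e \<Rightarrow> nat (zero outside E).\<close>

definition tour_adj :: "('e \<Rightarrow> 'v set) \<Rightarrow> ('e \<Rightarrow> nat) \<Rightarrow> ('v \<times> 'v) set" where
  "tour_adj ends \<chi> = {(a, b). \<exists>e. \<chi> e > 0 \<and> ends e = {a, b}}"

definition mg_connected :: "'v set \<Rightarrow> ('e \<Rightarrow> 'v set) \<Rightarrow> ('e \<Rightarrow> nat) \<Rightarrow> bool" where
  "mg_connected V ends \<chi> \<longleftrightarrow>
     (\<forall>e. \<chi> e > 0 \<longrightarrow> ends e \<subseteq> V) \<and>
     (\<forall>u \<in> V. \<forall>v \<in> V. (u, v) \<in> (tour_adj ends \<chi>)\<^sup>*)"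

definition mult_degree :: "'e set \<Rightarrow> ('e \<Rightarrow> 'v set) \<Rightarrow> ('e \<Rightarrow> nat) \<Rightarrow> 'v \<Rightarrow> nat" where
  "mult_degree E ends \<chi> u = (\<Sum>e \<in> {e \<in> E. u \<in> ends e}. \<chi> e)"

definition is_tour :: "'v set \<Rightarrow> 'e set \<Rightarrow> ('e \<Rightarrow> 'v set) \<Rightarrow> ('e \<Rightarrow> nat) \<Rightarrow> bool" where
  "is_tour V E ends \<chi> \<longleftrightarrow>
     (\<forall>e. e \<notin> E \<longrightarrow> \<chi> e = 0) \<and>
     mg_connected V ends \<chi> \<and>
     (\<forall>u \<in> V. even (mult_degree E ends \<chi> u))"

definition delta_F :: "'e set \<Rightarrow> ('e \<Rightarrow> 'v set) \<Rightarrow> ('e \<Rightarrow> nat) \<Rightarrow> 'v \<Rightarrow> 'e multiset" where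
  "delta_F E ends \<chi> u = (\<Sum>e \<in> {e \<in> E. u \<in> ends e}. replicate_mset (\<chi> e) e)"

definition P_set :: "'e \<Rightarrow> 'e \<Rightarrow> 'e \<Rightarrow> 'e multiset set" where
  "P_set e f g = {{#e, e#}, {#e, f#}, {#e, g#}, {#e, e, f, f#}, {#e, e, g, g#},
                  {#e, e, f, g#}, {#e, f, f, g#}, {#e, f, g, g#}}"

text \<open>Handpicked tour w.r.t. the point w (on the cubic support graph (V,E,ends)):
  at each vertex u, with e_u the edge of value 1, f_u of value \<theta> and g_u of value
  1-\<theta> (P_u is symmetric in f_u, g_u, so the labelling for \<theta> = 1/2 is irrelevant).\<close>
definition handpicked ::
  "real \<Rightarrow> ('e \<Rightarrow> real) \<Rightarrow> 'v set \<Rightarrow> 'e set \<Rightarrow> ('e \<Rightarrow> 'v set) \<Rightarrow> ('e \<Rightarrow> nat) \<Rightarrow> bool" where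
  "handpicked \<theta> w V E ends \<chi> \<longleftrightarrow>
     is_tour V E ends \<chi> \<and>
     (\<forall>u \<in> V. \<exists>eu fu gu. {e \<in> E. u \<in> ends e} = {eu, fu, gu} \<and>
        eu \<noteq> fu \<and> eu \<noteq> gu \<and> fu \<noteq> gu \<and>
        w eu = 1 \<and> w fu = \<theta> \<and> w gu = 1 - \<theta> \<and>
        delta_F E ends \<chi> u \<in> P_set eu fu gu)"

definition convex_comb_handpicked ::
  "real \<Rightarrow> ('e \<Rightarrow> real) \<Rightarrow> 'v set \<Rightarrow> 'e set \<Rightarrow> ('e \<Rightarrow> 'v set) \<Rightarrow>
   ('e \<Rightarrow> real) \<Rightarrow> (('e \<Rightarrow> nat) \<Rightarrow> real) \<Rightarrow> ('e \<Rightarrow> nat) set \<Rightarrow> bool" where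
  "convex_comb_handpicked \<theta> w V E ends y \<phi> \<F> \<longleftrightarrow>
     finite \<F> \<and>
     (\<forall>F \<in> \<F>. handpicked \<theta> w V E ends F) \<and>
     (\<forall>F \<in> \<F>. \<phi> F \<ge> 0) \<and>
     (\<Sum>F \<in> \<F>. \<phi> F) = 1 \<and>
     (\<forall>e \<in> E. y e = (\<Sum>F \<in> \<F>. \<phi> F * real (F e)))"

definition phi2 :: "(('e \<Rightarrow> nat) \<Rightarrow> real) \<Rightarrow> ('e \<Rightarrow> nat) set \<Rightarrow> 'e \<Rightarrow> real" where
  "phi2 \<phi> \<F> e = (\<Sum>F \<in> {F \<in> \<F>. F e = 2}. \<phi> F)"

definition phi_vertex ::
  "'e set \<Rightarrow> ('e \<Rightarrow> 'v set) \<Rightarrow> (('e \<Rightarrow> nat) \<Rightarrow> real) \<Rightarrow> ('e \<Rightarrow> nat) set \<Rightarrow> 'v \<Rightarrow> 'e multiset \<Rightarrow> real" where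
  "phi_vertex E ends \<phi> \<F> u p = (\<Sum>F \<in> {F \<in> \<F>. delta_F E ends F u = p}. \<phi> F)"

end

(*
  Weights at the contracted vertex v_Ubar match by (i), so the two convex combinations can be
  coupled: a transportation plan pairs tours F^U and F^Ubar only when they use the same multiset
  of cut edges at the contracted vertex, and a greedy plan has at most |F^U| + |F^Ubar| pairs.
  Paired tours use every cut edge equally often, so taking F^U on edges meeting U and F^Ubar
  elsewhere gives a multigraph on G_x; its vertex conditions are inherited from the contracted
  graphs, and it is connected because F^U is connected on U by (ii) while every vertex of Ubar
  reaches U along F^Ubar. Weighting the glued tours by the plan reproduces y and phi_2.
*)

theory Submission
  imports Defs
begin

section \<open>Couplings of weightings\<close>

lemma card_positive_decrement:
  fixes \<alpha> :: "'a \<Rightarrow> real"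
  assumes "finite A" "a \<in> A" "0 \<le> m"
  shows "card {a'\<in>A. 0 < \<alpha> a' - (if a' = a then m else 0)} \<le> card {a'\<in>A. 0 < \<alpha> a'}"
    and "0 < \<alpha> a \<Longrightarrow> \<alpha> a \<le> m \<Longrightarrow>
           card {a'\<in>A. 0 < \<alpha> a' - (if a' = a then m else 0)} < card {a'\<in>A. 0 < \<alpha> a'}"
proof -
  have sub: "{a'\<in>A. 0 < \<alpha> a' - (if a' = a then m else 0)} \<subseteq> {a'\<in>A. 0 < \<alpha> a'}"
    using assms(3) by auto
  then show "card {a'\<in>A. 0 < \<alpha> a' - (if a' = a then m else 0)} \<le> card {a'\<in>A. 0 < \<alpha> a'}"
    using assms(1) by (intro card_mono) auto
  assume "0 < \<alpha> a" "\<alpha> a \<le> m"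
  then have "{a'\<in>A. 0 < \<alpha> a' - (if a' = a then m else 0)} \<subset> {a'\<in>A. 0 < \<alpha> a'}"
    using sub assms(2) by force
  then show "card {a'\<in>A. 0 < \<alpha> a' - (if a' = a then m else 0)} < card {a'\<in>A. 0 < \<alpha> a'}"
    using assms(1) by (intro psubset_card_mono) auto
qed

lemma exists_partner_of_positive_weight:
  fixes \<alpha> :: "'a \<Rightarrow> real" and \<beta> :: "'b \<Rightarrow> real"
  assumes "finite A" "a \<in> A" "0 < \<alpha> a" "\<forall>a\<in>A. 0 \<le> \<alpha> a"
    and "sum \<alpha> {a'\<in>A. ka a' = ka a} = sum \<beta> {b\<in>B. kb b = ka a}"
  obtains b where "b \<in> B" "kb b = ka a" "0 < \<beta> b"
proof -
  have "0 < sum \<alpha> {a'\<in>A. ka a' = ka a}"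
    using assms(1-4) by (intro order.strict_trans2[OF _ member_le_sum]) auto
  then have "0 < sum \<beta> {b\<in>B. kb b = ka a}" using assms(5) by simp
  then show ?thesis
    using that sum_nonpos[of "{b\<in>B. kb b = ka a}" \<beta>] by force
qed

text \<open>Greedy construction: moving \<open>min (\<alpha> a) (\<beta> b)\<close> onto a pair \<open>(a, b)\<close> with equal keys
  exhausts \<open>a\<close> or \<open>b\<close>, which bounds the support.\<close>

lemma coupling_exists:
  fixes \<alpha> :: "'a \<Rightarrow> real" and \<beta> :: "'b \<Rightarrow> real"
  assumes "finite A" "finite B" "\<forall>a\<in>A. 0 \<le> \<alpha> a" "\<forall>b\<in>B. 0 \<le> \<beta> b"
    and "\<forall>p. sum \<alpha> {a\<in>A. ka a = p} = sum \<beta> {b\<in>B. kb b = p}"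
  shows "\<exists>c. (\<forall>a\<in>A. \<forall>b\<in>B. 0 \<le> c a b) \<and> (\<forall>a\<in>A. \<forall>b\<in>B. 0 < c a b \<longrightarrow> ka a = kb b) \<and>
             (\<forall>a\<in>A. (\<Sum>b\<in>B. c a b) = \<alpha> a) \<and> (\<forall>b\<in>B. (\<Sum>a\<in>A. c a b) = \<beta> b) \<and>
             card {(a, b) \<in> A \<times> B. 0 < c a b} \<le> card {a\<in>A. 0 < \<alpha> a} + card {b\<in>B. 0 < \<beta> b}"
  using assms(3-)
proof (induction "card {a\<in>A. 0 < \<alpha> a} + card {b\<in>B. 0 < \<beta> b}" arbitrary: \<alpha> \<beta> rule: less_induct)
  case less
  note \<alpha>_nonneg = less.prems(1) and \<beta>_nonneg = less.prems(2) and marginals = less.prems(3)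
  show ?case
  proof (cases "\<exists>a\<in>A. 0 < \<alpha> a")
    case False
    have "\<beta> b = 0" if "b \<in> B" for b
    proof -
      have "sum \<beta> {b'\<in>B. kb b' = kb b} = sum \<alpha> {a\<in>A. ka a = kb b}"
        using marginals by simp
      also have "\<dots> = 0" using False \<alpha>_nonneg by (intro sum.neutral) force
      finally have "sum \<beta> {b'\<in>B. kb b' = kb b} = 0" .
      then show ?thesis
        using sum_nonneg_eq_0_iff[of "{b'\<in>B. kb b' = kb b}" \<beta>] assms(2) \<beta>_nonneg that by auto
    qed
    then show ?thesis by (intro exI[of _ "\<lambda>_ _. 0"]) (use False \<alpha>_nonneg in force)
  next
    case True
    then obtain a where a: "a \<in> A" "0 < \<alpha> a" by blast
    obtain b where b: "b \<in> B" "kb b = ka a" "0 < \<beta> b"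
      using exists_partner_of_positive_weight[OF assms(1) a \<alpha>_nonneg] marginals by blast
    define m where "m = min (\<alpha> a) (\<beta> b)"
    define \<alpha>' where "\<alpha>' a' = \<alpha> a' - (if a' = a then m else 0)" for a'
    define \<beta>' where "\<beta>' b' = \<beta> b' - (if b' = b then m else 0)" for b'
    have \<alpha>'_nonneg: "\<forall>a'\<in>A. 0 \<le> \<alpha>' a'" and \<beta>'_nonneg: "\<forall>b'\<in>B. 0 \<le> \<beta>' b'"
      using \<alpha>_nonneg \<beta>_nonneg by (auto simp: \<alpha>'_def \<beta>'_def m_def)
    have marginals': "\<forall>p. sum \<alpha>' {a'\<in>A. ka a' = p} = sum \<beta>' {b'\<in>B. kb b' = p}"
      using marginals a(1) b(1,2) assms(1,2)
      by (simp add: \<alpha>'_def \<beta>'_def sum_subtractf sum.delta[where S="Collect _"])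
    have "0 \<le> m" using a b by (simp add: m_def)
    note decr\<alpha> = card_positive_decrement[OF assms(1) a(1) this, of \<alpha>, folded \<alpha>'_def]
    note decr\<beta> = card_positive_decrement[OF assms(2) b(1) \<open>0 \<le> m\<close>, of \<beta>, folded \<beta>'_def]
    have fewer_positive:
      "card {a'\<in>A. 0 < \<alpha>' a'} + card {b'\<in>B. 0 < \<beta>' b'} < card {a'\<in>A. 0 < \<alpha> a'} + card {b'\<in>B. 0 < \<beta> b'}"
    proof (cases "\<alpha> a \<le> \<beta> b")
      case True
      then have "\<alpha> a \<le> m" by (simp add: m_def)
      then show ?thesis using decr\<alpha>(2)[OF a(2)] decr\<beta>(1) by linarith
    next
      case False
      then have "\<beta> b \<le> m" by (simp add: m_def)
      then show ?thesis using decr\<beta>(2)[OF b(3)] decr\<alpha>(1) by linarith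
    qed
    obtain c' where c': "\<forall>a\<in>A. \<forall>b\<in>B. 0 \<le> c' a b" "\<forall>a\<in>A. \<forall>b\<in>B. 0 < c' a b \<longrightarrow> ka a = kb b"
        "\<forall>a'\<in>A. (\<Sum>b\<in>B. c' a' b) = \<alpha>' a'" "\<forall>b'\<in>B. (\<Sum>a\<in>A. c' a b') = \<beta>' b'"
        "card {(a, b) \<in> A \<times> B. 0 < c' a b} \<le> card {a\<in>A. 0 < \<alpha>' a} + card {b\<in>B. 0 < \<beta>' b}"
      using less.hyps[OF fewer_positive \<alpha>'_nonneg \<beta>'_nonneg marginals'] by blast
    define c where "c a' b' = c' a' b' + (if a' = a \<and> b' = b then m else 0)" for a' b'
    have support: "{(a', b') \<in> A \<times> B. 0 < c a' b'} \<subseteq> insert (a, b) {(a', b') \<in> A \<times> B. 0 < c' a' b'}"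
      by (auto simp: c_def split: if_splits)
    have "finite {(a', b') \<in> A \<times> B. 0 < c' a' b'}"
      using assms(1,2) by (auto intro: finite_subset[of _ "A \<times> B"])
    then have support_card: "card {(a', b') \<in> A \<times> B. 0 < c a' b'} \<le> Suc (card {(a', b') \<in> A \<times> B. 0 < c' a' b'})"
      using card_mono[OF _ support] by (simp add: card_insert_if split: if_splits)
    show ?thesis
    proof (intro exI[of _ c] conjI)
      show "\<forall>a'\<in>A. \<forall>b'\<in>B. 0 \<le> c a' b'"
        using c'(1) \<open>0 \<le> m\<close> by (simp add: c_def)
      show "\<forall>a'\<in>A. \<forall>b'\<in>B. 0 < c a' b' \<longrightarrow> ka a' = kb b'"
        using c'(2) b(2) by (auto simp: c_def split: if_splits)
      show "\<forall>a'\<in>A. (\<Sum>b'\<in>B. c a' b') = \<alpha> a'"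
        using c'(3) b(1) assms(2) by (simp add: c_def sum.distrib \<alpha>'_def)
      show "\<forall>b'\<in>B. (\<Sum>a'\<in>A. c a' b') = \<beta> b'"
        using c'(4) a(1) assms(1) by (simp add: c_def sum.distrib \<beta>'_def)
      show "card {(a', b') \<in> A \<times> B. 0 < c a' b'} \<le> card {a\<in>A. 0 < \<alpha> a} + card {b\<in>B. 0 < \<beta> b}"
        using support_card c'(5) fewer_positive by linarith
    qed
  qed
qed

lemma sum_pushforward:
  fixes w :: "'q \<Rightarrow> real"
  assumes "finite S"
  shows "(\<Sum>F\<in>f ` S. (\<Sum>q\<in>{q\<in>S. f q = F}. w q) * h F) = (\<Sum>q\<in>S. w q * h (f q))"
proof -
  have "(\<Sum>q\<in>S. w q * h (f q)) = (\<Sum>F\<in>f ` S. \<Sum>q\<in>{q\<in>S. f q = F}. w q * h (f q))"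
    using assms by (rule sum.image_gen)
  also have "\<dots> = (\<Sum>F\<in>f ` S. (\<Sum>q\<in>{q\<in>S. f q = F}. w q) * h F)"
    by (intro sum.cong refl) (simp add: sum_distrib_right)
  finally show ?thesis ..
qed

lemma sum_pushforward_pairs:
  fixes c :: "'a \<Rightarrow> 'b \<Rightarrow> real"
  assumes "finite A" "finite B" "\<forall>a\<in>A. \<forall>b\<in>B. 0 \<le> c a b"
  defines "S \<equiv> {(a, b) \<in> A \<times> B. 0 < c a b}"
  shows "(\<Sum>F\<in>case_prod G ` S. (\<Sum>q\<in>{q\<in>S. case_prod G q = F}. case_prod c q) * h F) =
         (\<Sum>a\<in>A. \<Sum>b\<in>B. c a b * h (G a b))"
proof -
  have "finite S" using assms(1,2) unfolding S_def by (auto intro: finite_subset[of _ "A \<times> B"])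
  then have "(\<Sum>F\<in>case_prod G ` S. (\<Sum>q\<in>{q\<in>S. case_prod G q = F}. case_prod c q) * h F) =
             (\<Sum>q\<in>S. case_prod c q * h (case_prod G q))"
    by (rule sum_pushforward)
  also have "\<dots> = (\<Sum>q\<in>A \<times> B. case_prod c q * h (case_prod G q))"
    using assms(1-3) by (intro sum.mono_neutral_left) (auto simp: S_def less_le)
  finally show ?thesis by (simp add: sum.cartesian_product split_def)
qed

lemma sum_coupling_left:
  fixes c :: "'a \<Rightarrow> 'b \<Rightarrow> real"
  assumes "\<forall>a\<in>A. \<forall>b\<in>B. 0 \<le> c a b" "\<forall>a\<in>A. (\<Sum>b\<in>B. c a b) = \<alpha> a"
    and "\<And>a b. a \<in> A \<Longrightarrow> b \<in> B \<Longrightarrow> 0 < c a b \<Longrightarrow> f a b = g a"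
  shows "(\<Sum>a\<in>A. \<Sum>b\<in>B. c a b * f a b) = (\<Sum>a\<in>A. \<alpha> a * g a)"
proof -
  have "c a b * f a b = c a b * g a" if "a \<in> A" "b \<in> B" for a b
    using that assms(1,3) by (cases "c a b = 0") (auto simp: less_le)
  then have "(\<Sum>a\<in>A. \<Sum>b\<in>B. c a b * f a b) = (\<Sum>a\<in>A. \<Sum>b\<in>B. c a b * g a)"
    by (intro sum.cong) auto
  also have "\<dots> = (\<Sum>a\<in>A. \<alpha> a * g a)"
    using assms(2) by (simp add: sum_distrib_right[symmetric])
  finally show ?thesis .
qed

lemma sum_coupling_right:
  fixes c :: "'a \<Rightarrow> 'b \<Rightarrow> real"
  assumes "\<forall>a\<in>A. \<forall>b\<in>B. 0 \<le> c a b" "\<forall>b\<in>B. (\<Sum>a\<in>A. c a b) = \<beta> b"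
    and "\<And>a b. a \<in> A \<Longrightarrow> b \<in> B \<Longrightarrow> 0 < c a b \<Longrightarrow> f a b = g b"
  shows "(\<Sum>a\<in>A. \<Sum>b\<in>B. c a b * f a b) = (\<Sum>b\<in>B. \<beta> b * g b)"
  using sum_coupling_left[of B A "\<lambda>b a. c a b" \<beta> "\<lambda>b a. f a b" g] assms by (simp add: sum.swap[of _ A])

lemma phi2_eq_sum:
  assumes "finite \<F>"
  shows "phi2 \<phi> \<F> e = (\<Sum>F\<in>\<F>. \<phi> F * (if F e = 2 then 1 else 0))"
  using assms by (simp add: phi2_def sum.inter_filter[symmetric] if_distrib cong: if_cong)

lemma convex_comb_of_coupling:
  fixes c :: "('e \<Rightarrow> nat) \<Rightarrow> ('e \<Rightarrow> nat) \<Rightarrow> real"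
    and G :: "('e \<Rightarrow> nat) \<Rightarrow> ('e \<Rightarrow> nat) \<Rightarrow> 'e \<Rightarrow> nat"
  assumes combA: "convex_comb_handpicked \<theta> w VA EA endsA yA \<phi>A \<A>"
    and combB: "convex_comb_handpicked \<theta> w VB EB endsB yB \<phi>B \<B>"
    and c_nonneg: "\<forall>a\<in>\<A>. \<forall>b\<in>\<B>. 0 \<le> c a b"
    and marginalA: "\<forall>a\<in>\<A>. (\<Sum>b\<in>\<B>. c a b) = \<phi>A a"
    and marginalB: "\<forall>b\<in>\<B>. (\<Sum>a\<in>\<A>. c a b) = \<phi>B b"
    and G_handpicked: "\<And>a b. a \<in> \<A> \<Longrightarrow> b \<in> \<B> \<Longrightarrow> 0 < c a b \<Longrightarrow> handpicked \<theta> w V E ends (G a b)"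
    and G_on_EA: "\<And>a b e. a \<in> \<A> \<Longrightarrow> b \<in> \<B> \<Longrightarrow> 0 < c a b \<Longrightarrow> e \<in> EA \<Longrightarrow> G a b e = a e"
    and G_on_EB: "\<And>a b e. a \<in> \<A> \<Longrightarrow> b \<in> \<B> \<Longrightarrow> 0 < c a b \<Longrightarrow> e \<in> EB \<Longrightarrow> G a b e = b e"
    and y: "\<forall>e\<in>E. e \<in> EA \<and> y e = yA e \<or> e \<in> EB \<and> y e = yB e"
  shows "(\<forall>e\<in>EA \<inter> EB. yA e = yB e) \<and>
    (\<exists>\<phi> \<F>. convex_comb_handpicked \<theta> w V E ends y \<phi> \<F> \<and>
       (\<forall>e\<in>EA. phi2 \<phi> \<F> e = phi2 \<phi>A \<A> e) \<and> (\<forall>e\<in>EB. phi2 \<phi> \<F> e = phi2 \<phi>B \<B> e) \<and>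
       card \<F> \<le> card {(a, b) \<in> \<A> \<times> \<B>. 0 < c a b})"
proof -
  have fin: "finite \<A>" "finite \<B>" and sumA: "sum \<phi>A \<A> = 1"
    and yA: "\<forall>e\<in>EA. yA e = (\<Sum>F\<in>\<A>. \<phi>A F * real (F e))"
    and yB: "\<forall>e\<in>EB. yB e = (\<Sum>F\<in>\<B>. \<phi>B F * real (F e))"
    using combA combB by (simp_all add: convex_comb_handpicked_def)
  define S where "S = {(a, b) \<in> \<A> \<times> \<B>. 0 < c a b}"
  define \<F> where "\<F> = case_prod G ` S"
  define \<phi> where "\<phi> F = (\<Sum>q\<in>{q\<in>S. case_prod G q = F}. case_prod c q)" for F
  have finS: "finite S" using fin unfolding S_def by (auto intro: finite_subset[of _ "\<A> \<times> \<B>"])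
  then have fin\<F>: "finite \<F>" by (simp add: \<F>_def)
  have average: "(\<Sum>F\<in>\<F>. \<phi> F * h F) = (\<Sum>a\<in>\<A>. \<Sum>b\<in>\<B>. c a b * h (G a b))" for h
    unfolding \<F>_def \<phi>_def S_def using fin c_nonneg by (rule sum_pushforward_pairs)
  have averageA: "(\<Sum>F\<in>\<F>. \<phi> F * h F) = (\<Sum>a\<in>\<A>. \<phi>A a * k a)"
    if "\<And>a b. a \<in> \<A> \<Longrightarrow> b \<in> \<B> \<Longrightarrow> 0 < c a b \<Longrightarrow> h (G a b) = k a" for h k
    unfolding average using c_nonneg marginalA that by (rule sum_coupling_left)
  have averageB: "(\<Sum>F\<in>\<F>. \<phi> F * h F) = (\<Sum>b\<in>\<B>. \<phi>B b * k b)"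
    if "\<And>a b. a \<in> \<A> \<Longrightarrow> b \<in> \<B> \<Longrightarrow> 0 < c a b \<Longrightarrow> h (G a b) = k b" for h k
    unfolding average using c_nonneg marginalB that by (rule sum_coupling_right)
  have y_A: "yA e = (\<Sum>F\<in>\<F>. \<phi> F * real (F e))" if "e \<in> EA" for e
    using yA that by (simp add: averageA[where k="\<lambda>a. real (a e)"] G_on_EA)
  have y_B: "yB e = (\<Sum>F\<in>\<F>. \<phi> F * real (F e))" if "e \<in> EB" for e
    using yB that by (simp add: averageB[where k="\<lambda>b. real (b e)"] G_on_EB)
  have "convex_comb_handpicked \<theta> w V E ends y \<phi> \<F>"
    unfolding convex_comb_handpicked_def
  proof (intro conjI ballI)
    show "handpicked \<theta> w V E ends F" if "F \<in> \<F>" for F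
      using that G_handpicked by (auto simp: \<F>_def S_def)
    show "0 \<le> \<phi> F" for F
      by (auto simp: \<phi>_def S_def intro: sum_nonneg less_imp_le)
    have "(\<Sum>F\<in>\<F>. \<phi> F * 1) = (\<Sum>a\<in>\<A>. \<phi>A a * 1)"
      by (rule averageA) simp
    then show "sum \<phi> \<F> = 1" using sumA by simp
    show "y e = (\<Sum>F\<in>\<F>. \<phi> F * real (F e))" if "e \<in> E" for e
      using y that by (auto simp: y_A y_B)
  qed (fact fin\<F>)
  moreover have "\<forall>e\<in>EA. phi2 \<phi> \<F> e = phi2 \<phi>A \<A> e"
    using fin fin\<F> by (simp add: phi2_eq_sum averageA[where k="\<lambda>a. if a e = 2 then 1 else 0" for e] G_on_EA)
  moreover have "\<forall>e\<in>EB. phi2 \<phi> \<F> e = phi2 \<phi>B \<B> e"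
    using fin fin\<F> by (simp add: phi2_eq_sum averageB[where k="\<lambda>b. if b e = 2 then 1 else 0" for e] G_on_EB)
  moreover have "card \<F> \<le> card S"
    unfolding \<F>_def using finS by (rule card_image_le)
  moreover have "\<forall>e\<in>EA \<inter> EB. yA e = yB e"
    by (simp add: y_A y_B)
  ultimately show ?thesis unfolding S_def by blast
qed

section \<open>Contracted graphs\<close>

lemma Kn_edgesE:
  assumes "e \<in> Kn_edges n"
  obtains i j where "e = {i, j}" "i \<in> {1..n}" "j \<in> {1..n}" "i \<noteq> j"
  using assms unfolding Kn_edges_def by auto

lemma Kn_edge_subset: "e \<in> Kn_edges n \<Longrightarrow> e \<subseteq> {1..n}"
  by (elim Kn_edgesE) auto

lemma Kn_edge_eq_doubleton: "e \<in> Kn_edges n \<Longrightarrow> y \<in> e \<Longrightarrow> z \<in> e \<Longrightarrow> y \<noteq> z \<Longrightarrow> e = {y, z}"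
  by (elim Kn_edgesE) auto

lemma supp_edge_subset: "e \<in> supp_edges n x \<Longrightarrow> e \<subseteq> {1..n}"
  unfolding supp_edges_def by (blast dest: Kn_edge_subset)

lemma finite_contr_edges: "finite (contr_edges n x W)"
proof -
  have "contr_edges n x W \<subseteq> Pow {1..n}"
    unfolding contr_edges_def using supp_edge_subset by blast
  then show ?thesis by (rule finite_subset) simp
qed

lemma supp_star_eq_contr_star:
  assumes "W \<subseteq> {1..n}" "u \<in> W"
  shows "{e \<in> supp_edges n x. u \<in> e} = {e \<in> contr_edges n x W. u \<in> contr_ends W e}"
  using assms by (auto simp: contr_edges_def contr_ends_def)

lemma supp_cut_complement:
  assumes "U \<subseteq> {1..n}"
  shows "supp_cut n x ({1..n} - U) = supp_cut n x U"
proof -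
  have "card (e \<inter> ({1..n} - U)) = 1 \<longleftrightarrow> card (e \<inter> U) = 1" if "e \<in> Kn_edges n" for e
    using that assms by (elim Kn_edgesE) (auto simp: Int_insert_left card_insert_if)
  then show ?thesis by (auto simp: supp_cut_def cut_def)
qed

lemma set_mset_delta_F:
  assumes "finite E"
  shows "set_mset (delta_F E ends \<chi> u) \<subseteq> {e \<in> E. u \<in> ends e}"
  using assms by (auto simp: delta_F_def set_mset_sum split: if_splits)

lemma contr_profile_subset_supp_cut:
  assumes "W \<subseteq> {1..n}"
  shows "set_mset (delta_F (contr_edges n x W) (contr_ends W) \<chi> 0) \<subseteq> supp_cut n x W"
proof
  fix e assume "e \<in># delta_F (contr_edges n x W) (contr_ends W) \<chi> 0"
  then have "e \<in> contr_edges n x W" and zero: "0 \<in> contr_ends W e"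
    using set_mset_delta_F[OF finite_contr_edges, of n x W "contr_ends W" \<chi> 0] by auto
  moreover have "\<not> e \<subseteq> W"
  proof
    assume "e \<subseteq> W"
    then have "0 \<in> W" using zero by (simp add: contr_ends_def subsetD)
    then show False using assms by auto
  qed
  ultimately have e: "e \<in> supp_edges n x" "e \<inter> W \<noteq> {}" "\<not> e \<subseteq> W"
    by (simp_all add: contr_edges_def)
  then obtain i j where "e = {i, j}" "i \<in> W" "j \<notin> W"
    by (auto simp: supp_edges_def elim!: Kn_edgesE)
  then show "e \<in> supp_cut n x W"
    using e(1) by (auto simp: supp_cut_def cut_def supp_edges_def)
qed

lemma count_contr_profile:
  assumes "e \<in> contr_edges n x W" "\<not> e \<subseteq> W"
  shows "count (delta_F (contr_edges n x W) (contr_ends W) \<chi> 0) e = \<chi> e"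
proof -
  have "0 \<in> contr_ends W e" using assms(2) by (simp add: contr_ends_def)
  then show ?thesis
    using assms(1) finite_contr_edges[of n x W]
    by (simp add: delta_F_def count_sum sum.delta[where S="Collect _"] if_distrib cong: if_cong)
qed

definition handpicked_at ::
  "real \<Rightarrow> ('e \<Rightarrow> real) \<Rightarrow> 'e set \<Rightarrow> ('e \<Rightarrow> 'v set) \<Rightarrow> ('e \<Rightarrow> nat) \<Rightarrow> 'v \<Rightarrow> bool" where
  "handpicked_at \<theta> w E ends \<chi> u \<longleftrightarrow>
     (\<exists>eu fu gu. {e \<in> E. u \<in> ends e} = {eu, fu, gu} \<and>
        eu \<noteq> fu \<and> eu \<noteq> gu \<and> fu \<noteq> gu \<and>
        w eu = 1 \<and> w fu = \<theta> \<and> w gu = 1 - \<theta> \<and>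
        delta_F E ends \<chi> u \<in> P_set eu fu gu)"

lemma handpicked_iff:
  "handpicked \<theta> w V E ends \<chi> \<longleftrightarrow> is_tour V E ends \<chi> \<and> (\<forall>u\<in>V. handpicked_at \<theta> w E ends \<chi> u)"
  unfolding handpicked_def handpicked_at_def ..

lemma local_conditions_cong:
  assumes star: "{e \<in> E. u \<in> ends e} = {e \<in> E'. u \<in> ends' e}"
    and agree: "\<forall>e\<in>{e \<in> E. u \<in> ends e}. \<chi> e = \<chi>' e"
  shows "mult_degree E ends \<chi> u = mult_degree E' ends' \<chi>' u"
    and "handpicked_at \<theta> w E ends \<chi> u \<longleftrightarrow> handpicked_at \<theta> w E' ends' \<chi>' u"
proof -
  show "mult_degree E ends \<chi> u = mult_degree E' ends' \<chi>' u"
    unfolding mult_degree_def star[symmetric] using agree by (intro sum.cong) auto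
  have "delta_F E ends \<chi> u = delta_F E' ends' \<chi>' u"
    unfolding delta_F_def star[symmetric] using agree by (intro sum.cong) auto
  then show "handpicked_at \<theta> w E ends \<chi> u \<longleftrightarrow> handpicked_at \<theta> w E' ends' \<chi>' u"
    unfolding handpicked_at_def star by simp
qed

lemma local_conditions_from_contraction:
  assumes "W \<subseteq> {1..n}" "u \<in> W"
    and "handpicked \<theta> x (contr_verts W) (contr_edges n x W) (contr_ends W) a"
    and "\<forall>e\<in>supp_edges n x. u \<in> e \<longrightarrow> g e = a e"
  shows "even (mult_degree (supp_edges n x) id g u) \<and> handpicked_at \<theta> x (supp_edges n x) id g u"
proof -
  have star: "{e \<in> supp_edges n x. u \<in> id e} = {e \<in> contr_edges n x W. u \<in> contr_ends W e}"
    using supp_star_eq_contr_star[OF assms(1,2)] by simp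
  have "\<forall>e\<in>{e \<in> supp_edges n x. u \<in> id e}. g e = a e" using assms(4) by simp
  note transfer = local_conditions_cong[OF star this]
  have "u \<in> contr_verts W" using assms(2) by (simp add: contr_verts_def)
  then show ?thesis
    using assms(3) by (simp add: transfer handpicked_iff is_tour_def)
qed

section \<open>Gluing tours along a critical cut\<close>

lemma sym_tour_adj: "sym (tour_adj ends \<chi>)"
  by (auto simp: sym_def tour_adj_def insert_commute)

lemma mg_connected_via_core:
  assumes "\<forall>e. 0 < \<chi> e \<longrightarrow> ends e \<subseteq> V"
    and core: "\<forall>u\<in>C. \<forall>v\<in>C. (u, v) \<in> (tour_adj ends \<chi>)\<^sup>*"
    and reach: "\<forall>v\<in>V. \<exists>u\<in>C. (v, u) \<in> (tour_adj ends \<chi>)\<^sup>*"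
  shows "mg_connected V ends \<chi>"
  unfolding mg_connected_def
proof (intro conjI ballI)
  fix u v assume "u \<in> V" "v \<in> V"
  then obtain u' v' where "u' \<in> C" "(u, u') \<in> (tour_adj ends \<chi>)\<^sup>*" "v' \<in> C" "(v, v') \<in> (tour_adj ends \<chi>)\<^sup>*"
    using reach by blast
  moreover have "(v', v) \<in> (tour_adj ends \<chi>)\<^sup>*"
    using \<open>(v, v') \<in> _\<close> by (rule symD[OF sym_rtrancl[OF sym_tour_adj]])
  ultimately show "(u, v) \<in> (tour_adj ends \<chi>)\<^sup>*"
    using core by (meson rtrancl_trans)
qed (use assms(1) in blast)

lemma reaches_outside_from_contraction:
  assumes W_sub: "W \<subseteq> {1..n}"
    and tour: "is_tour (contr_verts W) (contr_edges n x W) (contr_ends W) b"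
    and pos: "\<forall>e. 0 < b e \<longrightarrow> 0 < g e"
    and "v \<in> W"
  shows "\<exists>u\<in>{1..n} - W. (v, u) \<in> (tour_adj id g)\<^sup>*"
proof -
  let ?R = "tour_adj id g"
  have "(v, 0) \<in> (tour_adj (contr_ends W) b)\<^sup>*"
    using tour \<open>v \<in> W\<close> by (simp add: is_tour_def mg_connected_def contr_verts_def)
  then have "v = 0 \<or> (\<exists>u\<in>{1..n} - W. (v, u) \<in> ?R\<^sup>*)"
  proof (induction rule: converse_rtrancl_induct)
    case (step y z)
    then obtain e where e: "0 < b e" "contr_ends W e = {y, z}"
      by (auto simp: tour_adj_def)
    then have "e \<in> contr_edges n x W" using tour by (auto simp: is_tour_def)
    then have eK: "e \<in> Kn_edges n" by (simp add: contr_edges_def supp_edges_def)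
    have ge: "0 < g e" using pos e(1) by simp
    show ?case
    proof (cases "e \<subseteq> W")
      case True
      then have "e = {y, z}" using e(2) by (simp add: contr_ends_def)
      then have "(y, z) \<in> ?R" "z \<noteq> 0" using ge True W_sub by (auto simp: tour_adj_def)
      then show ?thesis using step.IH by (meson converse_rtrancl_into_rtrancl)
    next
      case False
      then have ends: "insert 0 (e \<inter> W) = {y, z}" using e(2) by (simp add: contr_ends_def)
      show ?thesis
      proof (cases "y = 0")
        case False
        have "y \<in> insert 0 (e \<inter> W)" unfolding ends by simp
        then have "y \<in> e" "y \<in> W" using False by auto
        moreover obtain j where "j \<in> e" "j \<notin> W" using \<open>\<not> e \<subseteq> W\<close> by auto
        ultimately have "e = {y, j}" "j \<in> {1..n} - W"
          using Kn_edge_eq_doubleton[OF eK] Kn_edge_subset[OF eK] by auto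
        then have "(y, j) \<in> ?R" using ge unfolding tour_adj_def by auto
        then show ?thesis using \<open>j \<in> {1..n} - W\<close> by blast
      qed simp
    qed
  qed simp
  then show ?thesis using \<open>v \<in> W\<close> W_sub by auto
qed

lemma handpicked_glue:
  fixes a b :: "nat set \<Rightarrow> nat"
  assumes U_sub: "U \<subseteq> {1..n}"
    and ha: "handpicked \<theta> x (contr_verts U) (contr_edges n x U) (contr_ends U) a"
    and hb: "handpicked \<theta> x (contr_verts ({1..n} - U)) (contr_edges n x ({1..n} - U))
               (contr_ends ({1..n} - U)) b"
    and inner: "mg_connected U id (\<lambda>e. if e \<subseteq> U then a e else 0)"
    and agree: "\<forall>e \<in> contr_edges n x U \<inter> contr_edges n x ({1..n} - U). a e = b e"
  shows "handpicked \<theta> x {1..n} (supp_edges n x) id (\<lambda>e. if e \<inter> U \<noteq> {} then a e else b e)"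
proof -
  define Ub where "Ub = {1..n} - U"
  define g where "g = (\<lambda>e. if e \<inter> U \<noteq> {} then a e else b e)"
  have Ub_sub: "Ub \<subseteq> {1..n}" and U_eq: "{1..n} - Ub = U" using U_sub by (auto simp: Ub_def)
  have hb': "handpicked \<theta> x (contr_verts Ub) (contr_edges n x Ub) (contr_ends Ub) b"
    using hb by (simp add: Ub_def)
  have ta: "is_tour (contr_verts U) (contr_edges n x U) (contr_ends U) a"
    and tb: "is_tour (contr_verts Ub) (contr_edges n x Ub) (contr_ends Ub) b"
    using ha hb' by (simp_all add: handpicked_iff)
  have a_supp: "0 < a e \<Longrightarrow> e \<in> contr_edges n x U" and b_supp: "0 < b e \<Longrightarrow> e \<in> contr_edges n x Ub" for e
    using ta tb by (auto simp: is_tour_def)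
  have g_a: "g e = a e" if "e \<in> supp_edges n x" "e \<inter> U \<noteq> {}" for e
    using that by (simp add: g_def)
  have g_b: "g e = b e" if "e \<in> supp_edges n x" "e \<inter> Ub \<noteq> {}" for e
    using that agree by (auto simp: g_def Ub_def contr_edges_def)
  have g_supp: "0 < g e \<Longrightarrow> e \<in> supp_edges n x" for e
    using a_supp[of e] b_supp[of e] by (auto simp: g_def contr_edges_def split: if_splits)
  have "mg_connected {1..n} id g"
  proof (rule mg_connected_via_core[where C = U])
    show "\<forall>e. 0 < g e \<longrightarrow> id e \<subseteq> {1..n}"
      using g_supp supp_edge_subset unfolding id_apply by blast
    have sub: "tour_adj id (\<lambda>e. if e \<subseteq> U then a e else 0) \<subseteq> tour_adj id g"
      using a_supp by (auto simp: tour_adj_def g_def contr_edges_def split: if_splits)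
    show "\<forall>u\<in>U. \<forall>v\<in>U. (u, v) \<in> (tour_adj id g)\<^sup>*"
      using inner rtrancl_mono[OF sub] unfolding mg_connected_def by blast
    have "\<forall>e. 0 < b e \<longrightarrow> 0 < g e"
      using b_supp g_b by (auto simp: contr_edges_def)
    then have "\<exists>u\<in>U. (v, u) \<in> (tour_adj id g)\<^sup>*" if "v \<in> Ub" for v
      using reaches_outside_from_contraction[OF Ub_sub tb _ that] unfolding U_eq by blast
    then show "\<forall>v\<in>{1..n}. \<exists>u\<in>U. (v, u) \<in> (tour_adj id g)\<^sup>*"
      unfolding Ub_def by blast
  qed
  moreover have "even (mult_degree (supp_edges n x) id g u) \<and> handpicked_at \<theta> x (supp_edges n x) id g u"
    if "u \<in> {1..n}" for u
  proof (cases "u \<in> U")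
    case True
    then show ?thesis using local_conditions_from_contraction[OF U_sub True ha] g_a by blast
  next
    case False
    then have "u \<in> Ub" using that by (simp add: Ub_def)
    then show ?thesis using local_conditions_from_contraction[OF Ub_sub _ hb'] g_b by blast
  qed
  moreover have "\<forall>e. e \<notin> supp_edges n x \<longrightarrow> g e = 0"
    using g_supp neq0_conv by blast
  ultimately show ?thesis
    unfolding g_def[symmetric] handpicked_iff is_tour_def by blast
qed

lemma supp_cut_subset_contr_edges: "supp_cut n x W \<subseteq> contr_edges n x W"
  by (auto simp: supp_cut_def cut_def contr_edges_def)

lemma supp_edge_meets_side:
  "e \<in> supp_edges n x \<Longrightarrow> e \<inter> U \<noteq> {} \<or> e \<inter> ({1..n} - U) \<noteq> {}"
  by (auto simp: supp_edges_def elim!: Kn_edgesE)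

lemma contr_profile_weights_eq:
  assumes U_sub: "U \<subseteq> {1..n}"
    and match: "\<And>p. set_mset p \<subseteq> supp_cut n x U \<Longrightarrow>
                  phi_vertex (contr_edges n x U) (contr_ends U) \<phi>U \<F>U 0 p =
                  phi_vertex (contr_edges n x ({1..n} - U)) (contr_ends ({1..n} - U)) \<phi>Ub \<F>Ub 0 p"
  shows "sum \<phi>U {a\<in>\<F>U. delta_F (contr_edges n x U) (contr_ends U) a 0 = p} =
         sum \<phi>Ub {b\<in>\<F>Ub. delta_F (contr_edges n x ({1..n} - U)) (contr_ends ({1..n} - U)) b 0 = p}"
proof (cases "set_mset p \<subseteq> supp_cut n x U")
  case True
  then show ?thesis using match by (simp add: phi_vertex_def)
next
  case False
  have "set_mset (delta_F (contr_edges n x ({1..n} - U)) (contr_ends ({1..n} - U)) b 0) \<subseteq> supp_cut n x U" for b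
    unfolding supp_cut_complement[OF U_sub, symmetric] by (rule contr_profile_subset_supp_cut) blast
  then have "{b\<in>\<F>Ub. delta_F (contr_edges n x ({1..n} - U)) (contr_ends ({1..n} - U)) b 0 = p} = {}"
    using False by auto
  moreover have "{a\<in>\<F>U. delta_F (contr_edges n x U) (contr_ends U) a 0 = p} = {}"
    using False contr_profile_subset_supp_cut[OF U_sub] by auto
  ultimately show ?thesis by (simp only: sum.empty)
qed

lemma agree_on_cut_if_eq_contr_profiles:
  assumes "delta_F (contr_edges n x U) (contr_ends U) a 0 =
         delta_F (contr_edges n x ({1..n} - U)) (contr_ends ({1..n} - U)) b 0"
  shows "\<forall>e \<in> contr_edges n x U \<inter> contr_edges n x ({1..n} - U). a e = b e"
proof
  fix e assume e: "e \<in> contr_edges n x U \<inter> contr_edges n x ({1..n} - U)"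
  then have "\<not> e \<subseteq> U" "\<not> e \<subseteq> {1..n} - U" by (auto simp: contr_edges_def)
  then show "a e = b e"
    using count_contr_profile[of e n x U a] count_contr_profile[of e n x "{1..n} - U" b] e assms
    by auto
qed

lemma convex_comb_glue:
  fixes c :: "(nat set \<Rightarrow> nat) \<Rightarrow> (nat set \<Rightarrow> nat) \<Rightarrow> real"
  assumes U_sub: "U \<subseteq> {1..n}"
    and combU: "convex_comb_handpicked \<theta> x (contr_verts U) (contr_edges n x U)
                  (contr_ends U) yU \<phi>U \<F>U"
    and combUb: "convex_comb_handpicked \<theta> x (contr_verts ({1..n} - U))
                  (contr_edges n x ({1..n} - U)) (contr_ends ({1..n} - U)) yUb \<phi>Ub \<F>Ub"
    and conn: "\<And>F. F \<in> \<F>U \<Longrightarrow> mg_connected U id (\<lambda>e. if e \<subseteq> U then F e else 0)"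
    and c: "\<forall>a\<in>\<F>U. \<forall>b\<in>\<F>Ub. 0 \<le> c a b"
      "\<forall>a\<in>\<F>U. \<forall>b\<in>\<F>Ub. 0 < c a b \<longrightarrow> delta_F (contr_edges n x U) (contr_ends U) a 0 =
         delta_F (contr_edges n x ({1..n} - U)) (contr_ends ({1..n} - U)) b 0"
      "\<forall>a\<in>\<F>U. (\<Sum>b\<in>\<F>Ub. c a b) = \<phi>U a" "\<forall>b\<in>\<F>Ub. (\<Sum>a\<in>\<F>U. c a b) = \<phi>Ub b"
  shows "(\<forall>e\<in>contr_edges n x U \<inter> contr_edges n x ({1..n} - U). yU e = yUb e) \<and>
    (\<exists>\<phi> \<F>. convex_comb_handpicked \<theta> x {1..n} (supp_edges n x) id (\<lambda>e. if e \<inter> U \<noteq> {} then yU e else yUb e) \<phi> \<F> \<and>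
       (\<forall>e\<in>contr_edges n x U. phi2 \<phi> \<F> e = phi2 \<phi>U \<F>U e) \<and>
       (\<forall>e\<in>contr_edges n x ({1..n} - U). phi2 \<phi> \<F> e = phi2 \<phi>Ub \<F>Ub e) \<and>
       card \<F> \<le> card {(a, b) \<in> \<F>U \<times> \<F>Ub. 0 < c a b})"
proof -
  define G where "G a b = (\<lambda>e. if e \<inter> U \<noteq> {} then a e else (b e :: nat))" for a b :: "nat set \<Rightarrow> nat"
  have glue_handpicked: "handpicked \<theta> x {1..n} (supp_edges n x) id (G a b)"
    if "a \<in> \<F>U" "b \<in> \<F>Ub" "0 < c a b" for a b
    unfolding G_def using handpicked_glue[OF U_sub _ _ conn agree_on_cut_if_eq_contr_profiles] combU combUb c(2) that
    by (simp add: convex_comb_handpicked_def)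
  have glue_on_U: "G a b e = a e"
    if "a \<in> \<F>U" "b \<in> \<F>Ub" "0 < c a b" "e \<in> contr_edges n x U" for a b e
    using that(4) by (simp add: G_def contr_edges_def)
  have glue_on_Ub: "G a b e = b e"
    if "a \<in> \<F>U" "b \<in> \<F>Ub" "0 < c a b" "e \<in> contr_edges n x ({1..n} - U)" for a b e
  proof (cases "e \<inter> U = {}")
    case False
    then have "e \<in> contr_edges n x U" using that(4) by (simp add: contr_edges_def)
    then show ?thesis using agree_on_cut_if_eq_contr_profiles[OF c(2)[rule_format, OF that(1-3)]] that(4) False by (simp add: G_def)
  qed (simp add: G_def)
  have y_split: "\<forall>e\<in>supp_edges n x. e \<in> contr_edges n x U \<and> (if e \<inter> U \<noteq> {} then yU e else yUb e) = yU e
      \<or> e \<in> contr_edges n x ({1..n} - U) \<and> (if e \<inter> U \<noteq> {} then yU e else yUb e) = yUb e"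
    using supp_edge_meets_side by (auto simp: contr_edges_def)
  show ?thesis
    by (rule convex_comb_of_coupling[OF combU combUb c(1,3,4) glue_handpicked glue_on_U glue_on_Ub y_split])
qed

theorem mainTheorem10:
  fixes n :: nat and \<theta> :: real and x :: "nat set \<Rightarrow> real" and U :: "nat set"
    and yU yUb :: "nat set \<Rightarrow> real"
    and \<phi>U \<phi>Ub :: "(nat set \<Rightarrow> nat) \<Rightarrow> real"
    and \<F>U \<F>Ub :: "(nat set \<Rightarrow> nat) set"
  assumes cyc: "theta_cyclic n \<theta> x"
    and cubic: "cubic_support n x"
    and crit: "critical_cut n x U"
    and combU: "convex_comb_handpicked \<theta> x (contr_verts U) (contr_edges n x U)
                  (contr_ends U) yU \<phi>U \<F>U"
    and combUb: "convex_comb_handpicked \<theta> x (contr_verts ({1..n} - U))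
                  (contr_edges n x ({1..n} - U)) (contr_ends ({1..n} - U)) yUb \<phi>Ub \<F>Ub"
    and match: "\<And>p. set_mset p \<subseteq> supp_cut n x U \<Longrightarrow>
                  phi_vertex (contr_edges n x U) (contr_ends U) \<phi>U \<F>U 0 p =
                  phi_vertex (contr_edges n x ({1..n} - U)) (contr_ends ({1..n} - U)) \<phi>Ub \<F>Ub 0 p"
    and conn: "\<And>F. F \<in> \<F>U \<Longrightarrow>
                  mg_connected U id (\<lambda>e. if e \<subseteq> U then F e else 0)"
  shows "(\<forall>e \<in> supp_cut n x U. yU e = yUb e) \<and>
         (\<exists>\<phi> \<F>. convex_comb_handpicked \<theta> x {1..n} (supp_edges n x) id
                   (\<lambda>e. if e \<inter> U \<noteq> {} then yU e else yUb e) \<phi> \<F> \<and>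
                 (\<forall>e \<in> contr_edges n x U. phi2 \<phi> \<F> e = phi2 \<phi>U \<F>U e) \<and>
                 (\<forall>e \<in> contr_edges n x ({1..n} - U). phi2 \<phi> \<F> e = phi2 \<phi>Ub \<F>Ub e) \<and>
                 card \<F> \<le> card \<F>U + card \<F>Ub)"
proof -
  \<comment> \<open>Of the hypotheses on \<open>x\<close> and \<open>U\<close> only \<open>U \<subseteq> {1..n}\<close> is needed; the local structure of
     handpicked tours is already part of the two given convex combinations.\<close>
  have U_sub: "U \<subseteq> {1..n}" using crit by (simp add: critical_cut_def proper_cut_def)
  obtain c where c: "\<forall>a\<in>\<F>U. \<forall>b\<in>\<F>Ub. 0 \<le> c a b"
      "\<forall>a\<in>\<F>U. \<forall>b\<in>\<F>Ub. 0 < c a b \<longrightarrow> delta_F (contr_edges n x U) (contr_ends U) a 0 =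
         delta_F (contr_edges n x ({1..n} - U)) (contr_ends ({1..n} - U)) b 0"
      "\<forall>a\<in>\<F>U. (\<Sum>b\<in>\<F>Ub. c a b) = \<phi>U a" "\<forall>b\<in>\<F>Ub. (\<Sum>a\<in>\<F>U. c a b) = \<phi>Ub b"
      "card {(a, b) \<in> \<F>U \<times> \<F>Ub. 0 < c a b} \<le> card {a\<in>\<F>U. 0 < \<phi>U a} + card {b\<in>\<F>Ub. 0 < \<phi>Ub b}"
    using coupling_exists[OF _ _ _ _ allI[OF contr_profile_weights_eq[OF U_sub match]]] combU combUb
    by (auto simp: convex_comb_handpicked_def)
  have "card {(a, b) \<in> \<F>U \<times> \<F>Ub. 0 < c a b} \<le> card \<F>U + card \<F>Ub"
    using c(5) combU combUb card_mono[of \<F>U "{a\<in>\<F>U. 0 < \<phi>U a}"] card_mono[of \<F>Ub "{b\<in>\<F>Ub. 0 < \<phi>Ub b}"]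
    by (auto simp: convex_comb_handpicked_def)
  moreover have "supp_cut n x U \<subseteq> contr_edges n x U \<inter> contr_edges n x ({1..n} - U)"
    using supp_cut_subset_contr_edges[of n x U] supp_cut_subset_contr_edges[of n x "{1..n} - U"]
      supp_cut_complement[OF U_sub] by blast
  moreover note convex_comb_glue[OF U_sub combU combUb conn c(1-4)]
  ultimately show ?thesis by (meson le_trans subsetD)
qed

end
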